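(* Assume $\mathbf a,\mathbf b\in\Delta^n$ with strictly positive entries, and let $\eta>0$. Let $(\mathbf u^*,\mathbf v^* )$ be the $(\mathbf u,\mathbf v)$-part of an optimal solution of the dual problem $\max_{(\mathbf u,\mathbf v,\mathbf t)\in\mathcal X}\{-\frac{1}{4\eta}\sum_{ij}t_{ij}^2-\tau\langle e^{-\mathbf u/\tau},\mathbf a\rangle-\tau\langle e^{-\mathbf v/\tau},\mathbf b\rangle+\mathbf a^\top\mathbf 1_n+\mathbf b^\top\mathbf 1_n\}$, $\mathcal X=\{(\mathbf u,\mathbf v,\mathbf t):t_{ij}\ge0,\ t_{ij}\ge u_i+v_j-C_{ij}\}$. Then for all $i,j\in[n]$, $u^*_i\le\|C\|_\infty+2\eta$ and $v^*_j\le\|C\|_\infty+2\eta$.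
   Context: Let $n\ge1$, $C\in\mathbb{R}^{n\times n}$ with nonnegative entries and $\|C\|_\infty=\max_{i,j}|C_{ij}|$; $\tau>0$; $\Delta^n=\{\mathbf x\in\mathbb{R}^n_+:\sum_i x_i=1\}$. $e^{-\mathbf u/\tau}$ is the entrywise exponential and $\mathbf 1_n$ the all-ones vector. *)

theory Defs
  imports "HOL-Analysis.Analysis"
begin

definition max_abs_norm :: "real^'n^'n \<Rightarrow> real" where
  "max_abs_norm C = Max {\<bar>C $ i $ j\<bar> | i j. True}"

definition prob_simplex :: "(real^'n) set" where
  "prob_simplex = {x. (\<forall>i. x $ i \<ge> 0) \<and> (\<Sum>i\<in>UNIV. x $ i) = 1}"

definition dual_feasible :: "real^'n^'n \<Rightarrow> real^'n \<Rightarrow> real^'n \<Rightarrow> real^'n^'n \<Rightarrow> bool" where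
  "dual_feasible C u v t \<longleftrightarrow>
     (\<forall>i j. t $ i $ j \<ge> 0 \<and> t $ i $ j \<ge> u $ i + v $ j - C $ i $ j)"

definition dual_obj :: "real \<Rightarrow> real \<Rightarrow> real^'n \<Rightarrow> real^'n \<Rightarrow> real^'n \<Rightarrow> real^'n \<Rightarrow> real^'n^'n \<Rightarrow> real" where
  "dual_obj \<eta> \<tau> a b u v t =
     - (1 / (4 * \<eta>)) * (\<Sum>i\<in>UNIV. \<Sum>j\<in>UNIV. (t $ i $ j)\<^sup>2)
     - \<tau> * (\<Sum>i\<in>UNIV. exp (- u $ i / \<tau>) * a $ i)
     - \<tau> * (\<Sum>j\<in>UNIV. exp (- v $ j / \<tau>) * b $ j)
     + (\<Sum>i\<in>UNIV. a $ i) + (\<Sum>j\<in>UNIV. b $ j)"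

definition dual_optimal :: "real^'n^'n \<Rightarrow> real \<Rightarrow> real \<Rightarrow> real^'n \<Rightarrow> real^'n \<Rightarrow> real^'n \<Rightarrow> real^'n \<Rightarrow> real^'n^'n \<Rightarrow> bool" where
  "dual_optimal C \<eta> \<tau> a b u v t \<longleftrightarrow>
     dual_feasible C u v t \<and>
     (\<forall>u' v' t'. dual_feasible C u' v' t' \<longrightarrow>
        dual_obj \<eta> \<tau> a b u' v' t' \<le> dual_obj \<eta> \<tau> a b u v t)"

end

(*
  At an optimum, the derivative of the dual objective vanishes along every feasible curve
  through the optimum. Moving one entry of t, moving u_k together with row k of t, and
  shifting (u, v) to (u - c, v + c) yield complementary slackness, the row sums
  sum_j t_kj = 2 eta a_k exp (-u_k / tau), and the balance
  sum_i a_i exp (-u_i / tau) = sum_j b_j exp (-v_j / tau).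
  If u_i > |C|_inf + 2 eta, the row sum at i is below 2 eta, which forces every v_j < 0.
  Then every row has a positive entry, whose slackness forces u_k > 0, so the left side of
  the balance is below 1 and the right side above 1. The bound on v follows by transposition.
*)
theory Submission
  imports Defs
begin

lemma max_0_square_has_real_derivative:
  "((\<lambda>s. (max 0 s)\<^sup>2) has_real_derivative 2 * max 0 s) (at (s::real))"
proof (cases s "0::real" rule: linorder_cases)
  case less
  then have "eventually (\<lambda>y. (max 0 y)\<^sup>2 = (0::real)) (nhds s)"
    by (auto simp: eventually_nhds_metric dist_real_def intro!: exI[of _ "- s"])
  from DERIV_cong_ev[OF refl this refl] show ?thesis
    using less by simp
next
  case greater
  then have "eventually (\<lambda>y. (max 0 y)\<^sup>2 = y\<^sup>2) (nhds s)"
    by (auto simp: eventually_nhds_metric dist_real_def intro!: exI[of _ s])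
  moreover have "((\<lambda>y. y\<^sup>2) has_real_derivative 2 * s) (at s)"
    by (auto intro!: derivative_eq_intros)
  ultimately show ?thesis
    using greater DERIV_cong_ev[OF refl _ refl] by fastforce
next
  case equal
  have "eventually (\<lambda>y. ((max 0 y)\<^sup>2 - (max 0 0)\<^sup>2) / (y - 0) = max 0 y) (at (0::real))"
    by (auto simp: eventually_at_filter power2_eq_square max_def)
  moreover have "((\<lambda>y. max 0 y) \<longlongrightarrow> max 0 (0::real)) (at 0)"
    by (intro tendsto_intros)
  ultimately show ?thesis
    unfolding equal has_field_derivative_iff by (simp add: tendsto_cong)
qed

lemma dual_obj_has_real_derivative:
  fixes U V :: "real \<Rightarrow> real^'n" and T :: "real \<Rightarrow> real^'n^'n"
  assumes T: "\<And>i j. ((\<lambda>\<delta>. (T \<delta> $ i $ j)\<^sup>2) has_real_derivative Q i j) (at 0)"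
    and U: "\<And>i. ((\<lambda>\<delta>. U \<delta> $ i) has_real_derivative U' i) (at 0)"
    and V: "\<And>j. ((\<lambda>\<delta>. V \<delta> $ j) has_real_derivative V' j) (at 0)"
    and tau: "\<tau> \<noteq> 0"
  shows "((\<lambda>\<delta>. dual_obj \<eta> \<tau> a b (U \<delta>) (V \<delta>) (T \<delta>)) has_real_derivative
      (\<Sum>i\<in>UNIV. a $ i * exp (- U 0 $ i / \<tau>) * U' i)
    + (\<Sum>j\<in>UNIV. b $ j * exp (- V 0 $ j / \<tau>) * V' j)
    - (\<Sum>i\<in>UNIV. \<Sum>j\<in>UNIV. Q i j) / (4 * \<eta>)) (at 0)"
proof -
  have S: "((\<lambda>\<delta>. \<Sum>i\<in>UNIV. \<Sum>j\<in>UNIV. (T \<delta> $ i $ j)\<^sup>2) has_real_derivative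
      (\<Sum>i\<in>UNIV. \<Sum>j\<in>UNIV. Q i j)) (at 0)"
    by (intro DERIV_sum T)
  have A: "((\<lambda>\<delta>. \<Sum>i\<in>UNIV. exp (- U \<delta> $ i / \<tau>) * a $ i) has_real_derivative
      (\<Sum>i\<in>UNIV. exp (- U 0 $ i / \<tau>) * (- U' i / \<tau>) * a $ i)) (at 0)"
    by (intro DERIV_sum) (auto intro!: derivative_eq_intros U simp: tau field_simps)
  have B: "((\<lambda>\<delta>. \<Sum>j\<in>UNIV. exp (- V \<delta> $ j / \<tau>) * b $ j) has_real_derivative
      (\<Sum>j\<in>UNIV. exp (- V 0 $ j / \<tau>) * (- V' j / \<tau>) * b $ j)) (at 0)"
    by (intro DERIV_sum) (auto intro!: derivative_eq_intros V simp: tau field_simps)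
  show ?thesis
    unfolding dual_obj_def
    by (rule DERIV_cong[OF DERIV_add[OF DERIV_add[OF DERIV_diff[OF DERIV_diff[OF
          DERIV_cmult[OF S] DERIV_cmult[OF A]] DERIV_cmult[OF B]] DERIV_const] DERIV_const]])
      (simp add: tau sum_distrib_left sum_divide_distrib sum_negf algebra_simps)
qed

lemma dual_optimal_stationary:
  fixes U V :: "real \<Rightarrow> real^'n" and T :: "real \<Rightarrow> real^'n^'n"
  assumes opt: "dual_optimal C \<eta> \<tau> a b u v t"
    and d: "d > 0" and feasible: "\<And>\<delta>. \<bar>\<delta>\<bar> < d \<Longrightarrow> dual_feasible C (U \<delta>) (V \<delta>) (T \<delta>)"
    and at_0: "U 0 = u" "V 0 = v" "T 0 = t"
    and T: "\<And>i j. ((\<lambda>\<delta>. (T \<delta> $ i $ j)\<^sup>2) has_real_derivative Q i j) (at 0)"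
    and U: "\<And>i. ((\<lambda>\<delta>. U \<delta> $ i) has_real_derivative U' i) (at 0)"
    and V: "\<And>j. ((\<lambda>\<delta>. V \<delta> $ j) has_real_derivative V' j) (at 0)"
    and tau: "\<tau> \<noteq> 0"
  shows "(\<Sum>i\<in>UNIV. \<Sum>j\<in>UNIV. Q i j) / (4 * \<eta>) =
    (\<Sum>i\<in>UNIV. a $ i * exp (- u $ i / \<tau>) * U' i) + (\<Sum>j\<in>UNIV. b $ j * exp (- v $ j / \<tau>) * V' j)"
proof -
  have "(\<Sum>i\<in>UNIV. a $ i * exp (- U 0 $ i / \<tau>) * U' i)
    + (\<Sum>j\<in>UNIV. b $ j * exp (- V 0 $ j / \<tau>) * V' j)
    - (\<Sum>i\<in>UNIV. \<Sum>j\<in>UNIV. Q i j) / (4 * \<eta>) = 0"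
  proof (rule DERIV_local_max[OF dual_obj_has_real_derivative[OF T U V tau] d], intro allI impI)
    fix \<delta> :: real assume "\<bar>0 - \<delta>\<bar> < d"
    then show "dual_obj \<eta> \<tau> a b (U \<delta>) (V \<delta>) (T \<delta>) \<le> dual_obj \<eta> \<tau> a b (U 0) (V 0) (T 0)"
      using opt feasible unfolding at_0 dual_optimal_def by simp
  qed
  then show ?thesis
    unfolding at_0 by simp
qed

lemma dual_optimal_complementary_slackness:
  assumes opt: "dual_optimal C \<eta> \<tau> a b u v t" and eta: "\<eta> > 0" and tau: "\<tau> \<noteq> 0"
    and pos: "t $ k $ l > 0"
  shows "t $ k $ l = u $ k + v $ l - C $ k $ l"
proof (rule ccontr)
  assume "t $ k $ l \<noteq> u $ k + v $ l - C $ k $ l"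
  moreover have feas: "dual_feasible C u v t"
    using opt by (simp add: dual_optimal_def)
  ultimately have slack: "u $ k + v $ l - C $ k $ l < t $ k $ l"
    unfolding dual_feasible_def by (metis less_eq_real_def)
  define T where "T \<delta> = (\<chi> i j. if i = k \<and> j = l then t $ i $ j + \<delta> else t $ i $ j)" for \<delta>
  have "(\<Sum>i\<in>UNIV. \<Sum>j\<in>UNIV. if i = k then if j = l then 2 * t $ k $ l else 0 else 0) / (4 * \<eta>) =
      (\<Sum>i\<in>UNIV. a $ i * exp (- u $ i / \<tau>) * 0) + (\<Sum>j\<in>UNIV. b $ j * exp (- v $ j / \<tau>) * 0)"
  proof (rule dual_optimal_stationary[OF opt _ _ _ _ _ _ _ _ tau])
    show "0 < min (t $ k $ l) (t $ k $ l - (u $ k + v $ l - C $ k $ l))"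
      using pos slack by simp
    show "dual_feasible C u v (T \<delta>)"
      if "\<bar>\<delta>\<bar> < min (t $ k $ l) (t $ k $ l - (u $ k + v $ l - C $ k $ l))" for \<delta>
      using that feas by (auto simp: dual_feasible_def T_def)
    show "((\<lambda>\<delta>. (T \<delta> $ i $ j)\<^sup>2) has_real_derivative
        (if i = k then if j = l then 2 * t $ k $ l else 0 else 0)) (at 0)" for i j
      by (auto simp: T_def intro!: derivative_eq_intros)
  qed (auto simp: T_def vec_eq_iff)
  then show False
    using pos eta by (subst (asm) sum.swap) simp
qed

lemma dual_optimal_row_sum:
  assumes opt: "dual_optimal C \<eta> \<tau> a b u v t" and eta: "\<eta> > 0" and tau: "\<tau> \<noteq> 0"
  shows "(\<Sum>j\<in>UNIV. t $ k $ j) = 2 * \<eta> * a $ k * exp (- u $ k / \<tau>)"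
proof -
  have feas: "dual_feasible C u v t"
    using opt by (simp add: dual_optimal_def)
  define U where "U \<delta> = (\<chi> i. u $ i + of_bool (i = k) * \<delta>)" for \<delta>
  \<comment> \<open>Clipping at 0 keeps the curve feasible for negative \<open>\<delta>\<close> without spoiling differentiability of the squares.\<close>
  define T where "T \<delta> = (\<chi> i j. if i = k then max 0 (t $ i $ j + \<delta>) else t $ i $ j)" for \<delta>
  have "(\<Sum>i\<in>UNIV. \<Sum>j\<in>UNIV. if i = k then 2 * t $ k $ j else 0) / (4 * \<eta>) =
      (\<Sum>i\<in>UNIV. a $ i * exp (- u $ i / \<tau>) * of_bool (i = k))
    + (\<Sum>j\<in>UNIV. b $ j * exp (- v $ j / \<tau>) * 0)"
  proof (rule dual_optimal_stationary[OF opt zero_less_one _ _ _ _ _ _ _ tau])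
    show "dual_feasible C (U \<delta>) v (T \<delta>)" for \<delta>
      unfolding dual_feasible_def
    proof (intro allI)
      fix i j
      show "0 \<le> T \<delta> $ i $ j \<and> U \<delta> $ i + v $ j - C $ i $ j \<le> T \<delta> $ i $ j"
        using feas[unfolded dual_feasible_def, rule_format, of i j]
        by (auto simp: U_def T_def le_max_iff_disj)
    qed
    show "((\<lambda>\<delta>. (T \<delta> $ i $ j)\<^sup>2) has_real_derivative (if i = k then 2 * t $ k $ j else 0)) (at 0)"
      for i j
    proof -
      have "((\<lambda>\<delta>. (max 0 (t $ k $ j + \<delta>))\<^sup>2) has_real_derivative 2 * max 0 (t $ k $ j + 0) * 1) (at 0)"
        by (rule DERIV_chain2[OF max_0_square_has_real_derivative]) (auto intro!: derivative_eq_intros)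
      then show ?thesis
        using feas by (simp add: T_def dual_feasible_def max_absorb2)
    qed
    show "((\<lambda>\<delta>. U \<delta> $ i) has_real_derivative of_bool (i = k)) (at 0)" for i
      by (auto simp: U_def intro!: derivative_eq_intros)
  qed (auto simp: U_def T_def vec_eq_iff max_absorb2 feas[unfolded dual_feasible_def])
  then have "2 * (\<Sum>j\<in>UNIV. t $ k $ j) / (4 * \<eta>) = a $ k * exp (- u $ k / \<tau>)"
    by (subst (asm) sum.swap) (simp add: sum_distrib_left)
  then show ?thesis
    using eta by (simp add: field_simps)
qed

lemma dual_optimal_balance:
  fixes a b u v :: "real^'n"
  assumes opt: "dual_optimal C \<eta> \<tau> a b u v t" and tau: "\<tau> \<noteq> 0"
  shows "(\<Sum>i\<in>UNIV. a $ i * exp (- u $ i / \<tau>)) = (\<Sum>j\<in>UNIV. b $ j * exp (- v $ j / \<tau>))"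
proof -
  have feas: "dual_feasible C u v t"
    using opt by (simp add: dual_optimal_def)
  have "(\<Sum>i\<in>(UNIV::'n set). \<Sum>j\<in>(UNIV::'n set). 0) / (4 * \<eta>) =
      (\<Sum>i\<in>UNIV. a $ i * exp (- u $ i / \<tau>) * - 1) + (\<Sum>j\<in>UNIV. b $ j * exp (- v $ j / \<tau>) * 1)"
  proof (rule dual_optimal_stationary[OF opt zero_less_one _ _ _ _ _ _ _ tau])
    show "dual_feasible C (\<chi> i. u $ i - \<delta>) (\<chi> j. v $ j + \<delta>) t" for \<delta>
      using feas by (simp add: dual_feasible_def)
  qed (auto simp: vec_eq_iff intro!: derivative_eq_intros)
  then show ?thesis
    by (simp add: sum_negf)
qed

lemma abs_le_max_abs_norm: "\<bar>C $ i $ j\<bar> \<le> max_abs_norm C"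
proof -
  have "{\<bar>C $ i $ j\<bar> | i j. True} = (\<lambda>(i, j). \<bar>C $ i $ j\<bar>) ` UNIV"
    by auto
  then show ?thesis
    unfolding max_abs_norm_def by (intro Max_ge) auto
qed

lemma max_abs_norm_transpose: "max_abs_norm (transpose C) = max_abs_norm C"
proof -
  have "{\<bar>transpose C $ i $ j\<bar> | i j. True} = {\<bar>C $ i $ j\<bar> | i j. True}"
    by (auto simp: transpose_def)
  then show ?thesis
    unfolding max_abs_norm_def by simp
qed

lemma dual_feasible_transpose:
  "dual_feasible (transpose C) v u (transpose t) \<longleftrightarrow> dual_feasible C u v t"
  unfolding dual_feasible_def transpose_def by (auto simp: add.commute)

lemma dual_obj_transpose: "dual_obj \<eta> \<tau> b a v u (transpose t) = dual_obj \<eta> \<tau> a b u v t"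
proof -
  have "(\<Sum>i\<in>UNIV. \<Sum>j\<in>UNIV. (transpose t $ i $ j)\<^sup>2) = (\<Sum>i\<in>UNIV. \<Sum>j\<in>UNIV. (t $ i $ j)\<^sup>2)"
    unfolding transpose_def by (simp add: sum.swap[of "\<lambda>i j. (t $ j $ i)\<^sup>2"])
  then show ?thesis
    unfolding dual_obj_def by simp
qed

lemma dual_optimal_transpose:
  assumes opt: "dual_optimal C \<eta> \<tau> a b u v t"
  shows "dual_optimal (transpose C) \<eta> \<tau> b a v u (transpose t)"
  unfolding dual_optimal_def
proof (intro conjI allI impI)
  show "dual_feasible (transpose C) v u (transpose t)"
    using opt by (simp add: dual_optimal_def dual_feasible_transpose)
  fix v' u' t' assume "dual_feasible (transpose C) v' u' t'"
  then have "dual_feasible C u' v' (transpose t')"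
    using dual_feasible_transpose[of C v' u' "transpose t'"] by simp
  then have "dual_obj \<eta> \<tau> a b u' v' (transpose t') \<le> dual_obj \<eta> \<tau> a b u v t"
    using opt by (simp add: dual_optimal_def)
  then show "dual_obj \<eta> \<tau> b a v' u' t' \<le> dual_obj \<eta> \<tau> b a v u (transpose t)"
    using dual_obj_transpose[of \<eta> \<tau> b a v' u' "transpose t'"] by (simp add: dual_obj_transpose)
qed

lemma dual_optimal_v_neg:
  assumes opt: "dual_optimal C \<eta> \<tau> a b u v t" and eta: "\<eta> > 0" and tau: "\<tau> > 0"
    and a: "a \<in> prob_simplex" and large: "u $ i > max_abs_norm C + 2 * \<eta>"
  shows "v $ j < 0"
proof -
  have feas: "0 \<le> t $ i $ j'" "u $ i + v $ j' - C $ i $ j' \<le> t $ i $ j'" for j'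
    using opt by (auto simp: dual_optimal_def dual_feasible_def)
  have C: "C $ i $ j \<le> max_abs_norm C" "0 \<le> max_abs_norm C"
    using abs_le_max_abs_norm[of C i j] by linarith+
  have "0 \<le> a $ i" "a $ i \<le> 1"
    using a member_le_sum[of i UNIV "\<lambda>k. a $ k"] by (auto simp: prob_simplex_def)
  then have "a $ i * exp (- u $ i / \<tau>) \<le> exp (- u $ i / \<tau>)"
    by (intro mult_left_le_one_le) auto
  also have "\<dots> < 1"
    using large C eta tau by simp
  finally have "a $ i * exp (- u $ i / \<tau>) < 1" .
  then have "(\<Sum>j'\<in>UNIV. t $ i $ j') < 2 * \<eta>"
    using dual_optimal_row_sum[OF opt eta] tau eta by simp
  moreover have "t $ i $ j \<le> (\<Sum>j'\<in>UNIV. t $ i $ j')"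
    using feas by (intro member_le_sum) auto
  ultimately show ?thesis
    using feas(2)[of j] C large by linarith
qed

lemma dual_optimal_u_pos:
  assumes opt: "dual_optimal C \<eta> \<tau> a b u v t" and eta: "\<eta> > 0" and tau: "\<tau> \<noteq> 0"
    and C_nonneg: "\<forall>i j. C $ i $ j \<ge> 0" and a_pos: "a $ k > 0" and v_neg: "\<forall>j. v $ j < 0"
  shows "u $ k > 0"
proof -
  have "(\<Sum>j\<in>UNIV. t $ k $ j) > 0"
    using dual_optimal_row_sum[OF opt eta tau] eta a_pos by simp
  then obtain j where "t $ k $ j \<noteq> 0"
    by (metis (mono_tags) less_irrefl sum.neutral)
  moreover have "t $ k $ j \<ge> 0"
    using opt by (simp add: dual_optimal_def dual_feasible_def)
  ultimately have "t $ k $ j > 0"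
    by simp
  with dual_optimal_complementary_slackness[OF opt eta tau this] show ?thesis
    using v_neg[rule_format, of j] C_nonneg[rule_format, of k j] by linarith
qed

lemma dual_optimal_u_bound:
  assumes C_nonneg: "\<forall>i j. C $ i $ j \<ge> 0" and tau: "\<tau> > 0" and eta: "\<eta> > 0"
    and a_simplex: "a \<in> prob_simplex" and a_pos: "\<forall>i. a $ i > 0"
    and b_simplex: "b \<in> prob_simplex" and b_pos: "\<forall>j. b $ j > 0"
    and opt: "dual_optimal C \<eta> \<tau> a b u v t"
  shows "u $ i \<le> max_abs_norm C + 2 * \<eta>"
proof (rule ccontr)
  assume "\<not> ?thesis"
  then have v_neg: "\<forall>j. v $ j < 0"
    using dual_optimal_v_neg[OF opt eta tau a_simplex, of i] by simp
  have u_pos: "u $ k > 0" for k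
    using dual_optimal_u_pos[OF opt eta _ C_nonneg _ v_neg] tau a_pos by force
  have "(\<Sum>i\<in>UNIV. a $ i * exp (- u $ i / \<tau>)) < (\<Sum>i\<in>UNIV. a $ i)"
    using u_pos tau a_pos by (intro sum_strict_mono) auto
  also have "\<dots> = (\<Sum>j\<in>UNIV. b $ j)"
    using a_simplex b_simplex by (simp add: prob_simplex_def)
  also have "\<dots> < (\<Sum>j\<in>UNIV. b $ j * exp (- v $ j / \<tau>))"
    using v_neg tau b_pos by (intro sum_strict_mono) (auto simp: divide_neg_pos)
  finally show False
    using dual_optimal_balance[OF opt] tau by simp
qed

theorem mainTheorem10:
  fixes C :: "real^'n^'n" and a b u v :: "real^'n" and t :: "real^'n^'n"
    and \<tau> \<eta> :: real
  assumes C_nonneg: "\<forall>i j. C $ i $ j \<ge> 0"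
    and tau_pos: "\<tau> > 0"
    and eta_pos: "\<eta> > 0"
    and a_simplex: "a \<in> prob_simplex" and a_pos: "\<forall>i. a $ i > 0"
    and b_simplex: "b \<in> prob_simplex" and b_pos: "\<forall>j. b $ j > 0"
    and opt: "dual_optimal C \<eta> \<tau> a b u v t"
  shows "(\<forall>i. u $ i \<le> max_abs_norm C + 2 * \<eta>) \<and> (\<forall>j. v $ j \<le> max_abs_norm C + 2 * \<eta>)"
proof (intro conjI allI)
  show "u $ i \<le> max_abs_norm C + 2 * \<eta>" for i
    using dual_optimal_u_bound[OF C_nonneg tau_pos eta_pos a_simplex a_pos b_simplex b_pos opt] .
  have "\<forall>i j. transpose C $ i $ j \<ge> 0"
    using C_nonneg by (simp add: transpose_def)
  from dual_optimal_u_bound[OF this tau_pos eta_pos b_simplex b_pos a_simplex a_pos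
      dual_optimal_transpose[OF opt]]
  show "v $ j \<le> max_abs_norm C + 2 * \<eta>" for j
    by (simp add: max_abs_norm_transpose)
qed

end
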